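(* Let $0<q<1$ and let $\{P_n\}_{n=0}^{\infty}$ be a sequence of monic polynomials in $x=\cos\theta$ orthogonal on $(a,b)$ with respect to a weight function $w(x)$. Suppose that $\{\mathcal{D}_q^2P_j\}_{j=2}^{\infty}$ is orthogonal on $(a,b)$ with respect to $\pi(x)w(x)$, where $\pi(x)$ is a polynomial of degree at most $4$. Then for each $n\ge 4$ there exist constants $b_{n,n+j}$, $j\in\{-2,-1,0,1,2\}$, such that $$P_n(x)=\sum_{j=-2}^{2}b_{n,n+j}\,\mathcal{D}_q^2P_{n+j}(x).$$
   Context: For a polynomial $f$ in $x=\cos\theta$, write $z=e^{i\theta}$ and $\breve f(z)=f\big(\tfrac{z+z^{-1}}{2}\big)$; the Askey–Wilson operator is $\mathcal{D}_qf(x)=\dfrac{\breve f(q^{1/2}z)-\breve f(q^{-1/2}z)}{(z-z^{-1})(q^{1/2}-q^{-1/2})/2}$. It maps polynomials of degree $n$ to polynomials of degree $n-1$. *)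

theory Defs
  imports "HOL-Analysis.Analysis" "HOL-Computational_Algebra.Polynomial"
begin

text \<open>The breve transform: for a real polynomial f in x = cos theta, evaluate
  f((z + 1/z)/2) for complex z.\<close>
definition breve :: "real poly \<Rightarrow> complex \<Rightarrow> complex" where
  "breve f z = poly (map_poly complex_of_real f) ((z + inverse z) / 2)"

definition AW_op :: "real \<Rightarrow> real poly \<Rightarrow> real poly" where
  "AW_op q f = (THE g. \<forall>z::complex. z \<noteq> 0 \<and> z\<^sup>2 \<noteq> 1 \<longrightarrow>
      poly (map_poly complex_of_real g) ((z + inverse z) / 2) =
      (breve f (complex_of_real (sqrt q) * z) - breve f (z / complex_of_real (sqrt q))) /
      ((z - inverse z) * complex_of_real (sqrt q - 1 / sqrt q) / 2))"

definition ivl :: "ereal \<Rightarrow> ereal \<Rightarrow> real set" where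
  "ivl a b = {x. a < ereal x \<and> ereal x < b}"

definition orthogonal_on :: "ereal \<Rightarrow> ereal \<Rightarrow> (real \<Rightarrow> real) \<Rightarrow> (nat \<Rightarrow> real poly) \<Rightarrow> nat set \<Rightarrow> bool" where
  "orthogonal_on a b w p I \<longleftrightarrow>
     (\<forall>m\<in>I. \<forall>n\<in>I.
        set_integrable lborel (ivl a b) (\<lambda>x. poly (p m) x * poly (p n) x * w x) \<and>
        (m \<noteq> n \<longrightarrow> (LINT x:ivl a b|lborel. poly (p m) x * poly (p n) x * w x) = 0) \<and>
        (m = n \<longrightarrow> (LINT x:ivl a b|lborel. poly (p m) x * poly (p n) x * w x) \<noteq> 0))"

end

theory Submission imports Defs begin

text \<open>
  Write \<open>t = sqrt q\<close>, \<open>X = (z + 1/z)/2\<close> and let \<open>x\<^sub>1, x\<^sub>2\<close> be \<open>X\<close> with \<open>z\<close> replaced by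
  \<open>t z\<close> and \<open>z/t\<close>. Then \<open>x\<^sub>1 + x\<^sub>2 = (t + 1/t) X\<close> and \<open>x\<^sub>1 x\<^sub>2 = X\<^sup>2 + (t - 1/t)\<^sup>2/4\<close>, so the
  quotient \<open>(x\<^sub>1\<^sup>m\<^sup>+\<^sup>1 - x\<^sub>2\<^sup>m\<^sup>+\<^sup>1)/(x\<^sub>1 - x\<^sub>2)\<close> is a polynomial in \<open>X\<close> of degree \<open>m\<close> with positive
  leading coefficient. Hence the Askey--Wilson operator lowers the degree of every nonconstant
  polynomial by exactly one, so the \<open>\<D>\<^sub>q\<^sup>2 P\<^sub>j\<close> (\<open>j \<ge> 2\<close>) have degree \<open>j - 2\<close> and form a basis
  of the polynomials. Expand \<open>P\<^sub>n\<close> in this basis. The coefficient of \<open>\<D>\<^sub>q\<^sup>2 P\<^sub>j\<close> is,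
  up to a nonzero factor, \<open>\<integral> P\<^sub>n \<D>\<^sub>q\<^sup>2 P\<^sub>j \<pi> w\<close>; if \<open>j < n - 2\<close> then \<open>\<D>\<^sub>q\<^sup>2 P\<^sub>j \<pi>\<close> has degree
  below \<open>n\<close>, so this integral vanishes by the orthogonality of the \<open>P\<^sub>k\<close>.
\<close>

abbreviation (input) cpoly :: "real poly \<Rightarrow> complex poly" where
  "cpoly \<equiv> map_poly complex_of_real"

lemma map_poly_of_real_add: "cpoly (p + q) = cpoly p + cpoly q"
  by (rule poly_eqI) (simp add: coeff_map_poly)

lemma map_poly_of_real_diff: "cpoly (p - q) = cpoly p - cpoly q"
  by (rule poly_eqI) (simp add: coeff_map_poly)

lemma map_poly_of_real_smult: "cpoly (smult c p) = smult (of_real c) (cpoly p)"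
  by (rule poly_eqI) (simp add: coeff_map_poly)

lemma map_poly_of_real_mult: "cpoly (p * q) = cpoly p * cpoly q"
  by (rule poly_eqI) (simp add: coeff_map_poly coeff_mult)

lemma map_poly_of_real_sum: "cpoly (\<Sum>i\<in>A. f i) = (\<Sum>i\<in>A. cpoly (f i))"
  by (induction A rule: infinite_finite_induct) (auto simp: map_poly_of_real_add)

lemma poly_map_poly_of_real: "poly (cpoly p) (of_real x) = of_real (poly p x)"
  by (induction p) (auto simp: map_poly_pCons)

lemma poly_map_poly_of_real_altdef:
  "poly (cpoly p) z = (\<Sum>i\<le>degree p. of_real (coeff p i) * z ^ i)"
  by (simp add: poly_altdef coeff_map_poly degree_map_poly)

lemma real_poly_eqI_Joukowski:
  assumes "\<And>z::complex. z \<noteq> 0 \<Longrightarrow> z\<^sup>2 \<noteq> 1 \<Longrightarrow>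
             poly (cpoly g) ((z + inverse z) / 2) = poly (cpoly h) ((z + inverse z) / 2)"
  shows "g = h"
proof -
  have "poly (g - h) y = 0" if "y > 1" for y
  proof -
    define r where "r = sqrt (y\<^sup>2 - 1)"
    have r: "r \<ge> 0" "r\<^sup>2 = y\<^sup>2 - 1" using \<open>y > 1\<close> by (auto simp: r_def)
    define z where "z = complex_of_real (y + r)"
    have "(y + r) * (y - r) = 1" using r by (simp add: algebra_simps power2_eq_square)
    then have z_inverse: "inverse z = of_real (y - r)"
      unfolding z_def by (metis inverse_unique of_real_1 of_real_mult)
    have "y + r > 1" using r \<open>y > 1\<close> by simp
    then have "y + r \<noteq> 0" "(y + r)\<^sup>2 \<noteq> 1" by (simp_all add: power2_eq_1_iff)
    then have "z \<noteq> 0" "z\<^sup>2 \<noteq> 1"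
      unfolding z_def by (simp_all only: of_real_eq_0_iff of_real_eq_1_iff not_False_eq_True flip: of_real_power)
    then have "poly (cpoly g) ((z + inverse z) / 2) = poly (cpoly h) ((z + inverse z) / 2)"
      by (rule assms)
    moreover have "(z + inverse z) / 2 = of_real y" unfolding z_inverse by (simp add: z_def)
    ultimately have "poly (cpoly g) (of_real y) = poly (cpoly h) (of_real y)" by simp
    then show ?thesis by (simp add: poly_map_poly_of_real)
  qed
  then have "{1<..} \<subseteq> {y. poly (g - h) y = 0}" by auto
  then have "infinite {y. poly (g - h) y = 0}"
    using infinite_Ioi[of "1::real"] finite_subset by blast
  then have "g - h = 0" using poly_roots_finite by blast
  then show ?thesis by simp
qed

text \<open>\<open>aw_quotient t m\<close> expresses \<open>(x\<^sub>1\<^sup>m\<^sup>+\<^sup>1 - x\<^sub>2\<^sup>m\<^sup>+\<^sup>1)/(x\<^sub>1 - x\<^sub>2)\<close> as a polynomial in \<open>X\<close>, via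
  \<open>s\<^sub>m\<^sub>+\<^sub>2 = (x\<^sub>1 + x\<^sub>2) s\<^sub>m\<^sub>+\<^sub>1 - x\<^sub>1 x\<^sub>2 s\<^sub>m\<close>; \<open>aw_lead t m\<close> is its leading coefficient.\<close>

fun aw_quotient :: "real \<Rightarrow> nat \<Rightarrow> real poly" where
  "aw_quotient t 0 = 1"
| "aw_quotient t (Suc 0) = [:0, t + 1/t:]"
| "aw_quotient t (Suc (Suc m)) =
     [:0, t + 1/t:] * aw_quotient t (Suc m) - [:(t - 1/t)\<^sup>2 / 4, 0, 1:] * aw_quotient t m"

fun aw_lead :: "real \<Rightarrow> nat \<Rightarrow> real" where
  "aw_lead t 0 = 1"
| "aw_lead t (Suc 0) = t + 1/t"
| "aw_lead t (Suc (Suc m)) = (t + 1/t) * aw_lead t (Suc m) - aw_lead t m"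

lemma aw_lead_Suc: "t \<noteq> 0 \<Longrightarrow> aw_lead t (Suc m) = t * aw_lead t m + (1/t) ^ Suc m"
proof (induction m)
  case (Suc m)
  then show ?case by (simp add: field_simps)
qed simp

lemma aw_lead_pos: "t > 0 \<Longrightarrow> aw_lead t m > 0"
  by (induction m) (simp_all add: aw_lead_Suc add_pos_pos)

lemma degree_aw_quotient: "degree (aw_quotient t m) \<le> m"
  and coeff_aw_quotient: "coeff (aw_quotient t m) m = aw_lead t m"
proof (induction t m rule: aw_quotient.induct)
  case (3 t m)
  let ?A = "[:0, t + 1/t:] * aw_quotient t (Suc m)"
  let ?B = "[:(t - 1/t)\<^sup>2 / 4, 0, 1:] * aw_quotient t m"
  { case 1
    have "degree ?A \<le> Suc (Suc m)"
      using 3 degree_mult_le[of "[:0, t + 1/t:]" "aw_quotient t (Suc m)"]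
      by (simp del: mult_pCons_left split: if_splits)
    moreover have "degree ?B \<le> Suc (Suc m)"
      using 3 degree_mult_le[of "[:(t - 1/t)\<^sup>2 / 4, 0, 1:]" "aw_quotient t m"]
      by (simp del: mult_pCons_left)
    ultimately show ?case by (metis aw_quotient.simps(3) degree_diff_le)
  next
    case 2
    have "coeff ?B (Suc (Suc m)) = aw_lead t m" using 3 by (simp add: coeff_eq_0)
    with 3 show ?case by simp }
qed simp_all

lemma poly_aw_quotient:
  fixes x\<^sub>1 x\<^sub>2 X :: complex
  assumes "x\<^sub>1 + x\<^sub>2 = of_real (t + 1/t) * X" "x\<^sub>1 * x\<^sub>2 = X\<^sup>2 + of_real ((t - 1/t)\<^sup>2 / 4)"
  shows "(x\<^sub>1 - x\<^sub>2) * poly (cpoly (aw_quotient t m)) X = x\<^sub>1 ^ Suc m - x\<^sub>2 ^ Suc m"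
  using assms
proof (induction t m rule: aw_quotient.induct)
  case (1 t)
  show ?case by simp
next
  case (2 t)
  then have "(x\<^sub>1 - x\<^sub>2) * poly (cpoly (aw_quotient t 1)) X = (x\<^sub>1 - x\<^sub>2) * (x\<^sub>1 + x\<^sub>2)"
    by (simp add: map_poly_pCons mult.commute)
  then show ?case by (simp add: algebra_simps power2_eq_square)
next
  case (3 t m)
  have recurrence: "poly (cpoly (aw_quotient t (Suc (Suc m)))) X =
      (x\<^sub>1 + x\<^sub>2) * poly (cpoly (aw_quotient t (Suc m))) X - (x\<^sub>1 * x\<^sub>2) * poly (cpoly (aw_quotient t m)) X"
    unfolding 3(3,4)
    by (simp only: aw_quotient.simps map_poly_of_real_diff map_poly_of_real_mult poly_diff poly_mult)
       (simp add: map_poly_pCons power2_eq_square algebra_simps)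
  have "(x\<^sub>1 - x\<^sub>2) * poly (cpoly (aw_quotient t (Suc (Suc m)))) X =
        (x\<^sub>1 + x\<^sub>2) * ((x\<^sub>1 - x\<^sub>2) * poly (cpoly (aw_quotient t (Suc m))) X)
        - (x\<^sub>1 * x\<^sub>2) * ((x\<^sub>1 - x\<^sub>2) * poly (cpoly (aw_quotient t m)) X)"
    unfolding recurrence by (simp add: algebra_simps del: aw_quotient.simps)
  also have "\<dots> = x\<^sub>1 ^ Suc (Suc (Suc m)) - x\<^sub>2 ^ Suc (Suc (Suc m))"
    unfolding 3(1,2)[OF 3(3,4)] by (simp add: algebra_simps)
  finally show ?case .
qed

definition aw_diff :: "real \<Rightarrow> real poly \<Rightarrow> real poly" where
  "aw_diff t f = (\<Sum>m<degree f. smult (coeff f (Suc m)) (aw_quotient t m))"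

lemma poly_aw_diff:
  fixes x\<^sub>1 x\<^sub>2 X :: complex
  assumes "x\<^sub>1 + x\<^sub>2 = of_real (t + 1/t) * X" "x\<^sub>1 * x\<^sub>2 = X\<^sup>2 + of_real ((t - 1/t)\<^sup>2 / 4)"
  shows "(x\<^sub>1 - x\<^sub>2) * poly (cpoly (aw_diff t f)) X = poly (cpoly f) x\<^sub>1 - poly (cpoly f) x\<^sub>2"
proof -
  have "(x\<^sub>1 - x\<^sub>2) * poly (cpoly (aw_diff t f)) X =
        (\<Sum>m<degree f. of_real (coeff f (Suc m)) * ((x\<^sub>1 - x\<^sub>2) * poly (cpoly (aw_quotient t m)) X))"
    by (simp add: aw_diff_def map_poly_of_real_sum map_poly_of_real_smult poly_sum
        sum_distrib_left algebra_simps)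
  also have "\<dots> = (\<Sum>m<degree f. of_real (coeff f (Suc m)) * (x\<^sub>1 ^ Suc m - x\<^sub>2 ^ Suc m))"
    using poly_aw_quotient[OF assms] by simp
  also have "\<dots> = (\<Sum>i\<le>degree f. of_real (coeff f i) * (x\<^sub>1 ^ i - x\<^sub>2 ^ i))"
  proof (cases "degree f")
    case (Suc d)
    show ?thesis unfolding Suc lessThan_Suc_atMost by (subst sum.atMost_Suc_shift) simp
  qed simp
  also have "\<dots> = poly (cpoly f) x\<^sub>1 - poly (cpoly f) x\<^sub>2"
    by (simp add: poly_map_poly_of_real_altdef sum_subtractf algebra_simps)
  finally show ?thesis .
qed

lemma aw_diff_Joukowski:
  fixes z :: complex
  assumes "t > 0" "t \<noteq> 1" "z \<noteq> 0" "z\<^sup>2 \<noteq> 1"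
  shows "poly (cpoly (aw_diff t f)) ((z + inverse z) / 2) =
    (breve f (of_real t * z) - breve f (z / of_real t)) / ((z - inverse z) * of_real (t - 1/t) / 2)"
proof -
  define x\<^sub>1 where "x\<^sub>1 = (of_real t * z + inverse (of_real t * z)) / 2"
  define x\<^sub>2 where "x\<^sub>2 = (z / of_real t + inverse (z / of_real t)) / 2"
  define X where "X = (z + inverse z) / 2"
  have t: "complex_of_real t \<noteq> 0" using assms(1) by simp
  have "x\<^sub>1 + x\<^sub>2 = of_real (t + 1/t) * X" "x\<^sub>1 * x\<^sub>2 = X\<^sup>2 + of_real ((t - 1/t)\<^sup>2 / 4)"
    using t assms(3) unfolding x\<^sub>1_def x\<^sub>2_def X_def by (simp_all add: field_simps power2_eq_square)
  note diff = poly_aw_diff[OF this, of f]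
  have denominator: "(z - inverse z) * of_real (t - 1/t) / 2 = x\<^sub>1 - x\<^sub>2"
    using t assms(3) unfolding x\<^sub>1_def x\<^sub>2_def by (simp add: field_simps)
  have "z - inverse z \<noteq> 0"
    using assms(3,4) by (simp add: field_simps power2_eq_square)
  moreover have "complex_of_real (t - 1/t) \<noteq> 0"
    unfolding of_real_eq_0_iff
  proof
    assume "t - 1/t = 0"
    then have "t\<^sup>2 = 1" using assms(1) by (simp add: field_simps power2_eq_square)
    with assms(1,2) show False by (simp add: power2_eq_1_iff)
  qed
  ultimately have "x\<^sub>1 - x\<^sub>2 \<noteq> 0"
    unfolding denominator[symmetric] by (metis divide_eq_0_iff mult_eq_0_iff zero_neq_numeral)
  then show ?thesis
    unfolding denominator breve_def x\<^sub>1_def[symmetric] x\<^sub>2_def[symmetric] X_def[symmetric]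
    using diff by (simp add: field_simps)
qed

lemma AW_op_eq_aw_diff:
  assumes "0 < q" "q \<noteq> 1"
  shows "AW_op q f = aw_diff (sqrt q) f"
  unfolding AW_op_def
proof (rule the_equality)
  have "sqrt q > 0" "sqrt q \<noteq> 1" using assms by simp_all
  then show "\<forall>z. z \<noteq> 0 \<and> z\<^sup>2 \<noteq> 1 \<longrightarrow>
      poly (cpoly (aw_diff (sqrt q) f)) ((z + inverse z) / 2) =
      (breve f (of_real (sqrt q) * z) - breve f (z / of_real (sqrt q))) /
      ((z - inverse z) * of_real (sqrt q - 1 / sqrt q) / 2)"
    using aw_diff_Joukowski by blast
  then show "g = aw_diff (sqrt q) f" if "\<forall>z. z \<noteq> 0 \<and> z\<^sup>2 \<noteq> 1 \<longrightarrow>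
      poly (cpoly g) ((z + inverse z) / 2) =
      (breve f (of_real (sqrt q) * z) - breve f (z / of_real (sqrt q))) /
      ((z - inverse z) * of_real (sqrt q - 1 / sqrt q) / 2)" for g
    using that by (intro real_poly_eqI_Joukowski) simp
qed

lemma coeff_aw_diff: "coeff (aw_diff t f) k = (\<Sum>m<degree f. coeff f (Suc m) * coeff (aw_quotient t m) k)"
  by (simp add: aw_diff_def coeff_sum)

lemma degree_aw_diff:
  assumes "t > 0" "degree f = Suc d"
  shows "degree (aw_diff t f) = d" "aw_diff t f \<noteq> 0"
proof -
  have vanish: "coeff (aw_quotient t m) k = 0" if "m < k" for m k
    using degree_aw_quotient[of t m] that by (intro coeff_eq_0) simp
  have "coeff (aw_diff t f) k = 0" if "k > d" for k
    using vanish that by (simp add: coeff_aw_diff assms(2))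
  then have "degree (aw_diff t f) \<le> d" by (intro degree_le) auto
  have "lead_coeff f \<noteq> 0" using assms(2) by (metis degree_0 leading_coeff_0_iff nat.distinct(1))
  moreover have "coeff (aw_diff t f) d = lead_coeff f * aw_lead t d"
    using vanish by (simp add: coeff_aw_diff assms(2) coeff_aw_quotient)
  ultimately have "coeff (aw_diff t f) d \<noteq> 0" using aw_lead_pos[OF assms(1), of d] by simp
  with \<open>degree (aw_diff t f) \<le> d\<close> show "degree (aw_diff t f) = d" "aw_diff t f \<noteq> 0"
    by (auto intro: le_antisym le_degree)
qed

lemma degree_AW_op:
  assumes "0 < q" "q \<noteq> 1" "degree f = Suc d"
  shows "degree (AW_op q f) = d" "AW_op q f \<noteq> 0"
  using degree_aw_diff[of "sqrt q" f d] assms by (simp_all add: AW_op_eq_aw_diff)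

lemma degree_AW_op_AW_op:
  assumes "0 < q" "q \<noteq> 1" "degree f = k + 2"
  shows "degree (AW_op q (AW_op q f)) = k" "AW_op q (AW_op q f) \<noteq> 0"
  using assms degree_AW_op[of q "AW_op q f" k] degree_AW_op(1)[of q f "Suc k"] by simp_all

lemma poly_eq_sum_degree_basis:
  fixes B :: "nat \<Rightarrow> 'a::field poly"
  assumes "\<And>k. k \<le> n \<Longrightarrow> degree (B k) = k" "\<And>k. k \<le> n \<Longrightarrow> B k \<noteq> 0" "degree p \<le> n"
  shows "\<exists>c. p = (\<Sum>k\<le>n. smult (c k) (B k))"
  using assms
proof (induction n arbitrary: p)
  case 0
  obtain \<beta> where \<beta>: "B 0 = [:\<beta>:]" "\<beta> \<noteq> 0"
    using "0.prems"(1,2)[of 0] by (metis degree_eq_zeroE pCons_0_0 order.refl)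
  obtain \<alpha> where "p = [:\<alpha>:]" using "0.prems"(3) by (metis degree_eq_zeroE le_zero_eq)
  then have "p = (\<Sum>k\<le>0. smult (\<alpha> / \<beta>) (B k))" using \<beta> by simp
  then show ?case by (rule exI[where x = "\<lambda>_. \<alpha> / \<beta>"])
next
  case (Suc n)
  define \<gamma> where "\<gamma> = coeff p (Suc n) / lead_coeff (B (Suc n))"
  define r where "r = p - smult \<gamma> (B (Suc n))"
  have B: "degree (B (Suc n)) = Suc n" "lead_coeff (B (Suc n)) \<noteq> 0"
    using Suc.prems(1,2)[of "Suc n"] leading_coeff_0_iff by blast+
  then have "coeff r (Suc n) = 0" by (simp add: r_def \<gamma>_def)
  then have "degree r \<noteq> Suc n" by (metis degree_0 leading_coeff_0_iff nat.distinct(1))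
  moreover have "degree r \<le> Suc n"
    unfolding r_def using Suc.prems(3) B(1) by (intro degree_diff_le) simp_all
  ultimately have "degree r \<le> n" by simp
  then obtain c where c: "r = (\<Sum>k\<le>n. smult (c k) (B k))"
    using Suc.IH[of r] Suc.prems(1,2) by fastforce
  have "(\<Sum>k\<le>n. smult ((c(Suc n := \<gamma>)) k) (B k)) = r"
    unfolding c by (intro sum.cong) auto
  then have "p = (\<Sum>k\<le>Suc n. smult ((c(Suc n := \<gamma>)) k) (B k))"
    by (simp add: r_def)
  then show ?case by blast
qed

lemma set_integral_sum:
  fixes f :: "'i \<Rightarrow> 'a \<Rightarrow> 'b::{banach, second_countable_topology}"
  assumes "\<And>i. i \<in> I \<Longrightarrow> set_integrable M A (f i)"
  shows "(LINT x:A|M. (\<Sum>i\<in>I. f i x)) = (\<Sum>i\<in>I. LINT x:A|M. f i x)"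
  using assms unfolding set_lebesgue_integral_def set_integrable_def
  by (simp add: scaleR_sum_right Bochner_Integration.integral_sum)

lemma orthogonal_on_integral_sum:
  assumes "orthogonal_on a b w p I" "finite K" "K \<subseteq> I" "j \<in> I"
  shows "(LINT x:ivl a b|lborel. poly (\<Sum>k\<in>K. smult (c k) (p k)) x * poly (p j) x * w x) =
    (if j \<in> K then c j * (LINT x:ivl a b|lborel. poly (p j) x * poly (p j) x * w x) else 0)"
proof -
  let ?ip = "\<lambda>k. LINT x:ivl a b|lborel. poly (p k) x * poly (p j) x * w x"
  have integrable: "set_integrable lborel (ivl a b) (\<lambda>x. poly (p k) x * poly (p j) x * w x)"
    if "k \<in> K" for k
    using assms(1,3,4) that unfolding orthogonal_on_def by blast
  have ip_zero: "?ip k = 0" if "k \<in> K" "k \<noteq> j" for k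
    using assms(1,3,4) that unfolding orthogonal_on_def by blast
  have "(LINT x:ivl a b|lborel. poly (\<Sum>k\<in>K. smult (c k) (p k)) x * poly (p j) x * w x) =
        (LINT x:ivl a b|lborel. (\<Sum>k\<in>K. c k * (poly (p k) x * poly (p j) x * w x)))"
    by (simp add: poly_sum sum_distrib_right mult.assoc)
  also have "\<dots> = (\<Sum>k\<in>K. c k * ?ip k)"
    using integrable by (simp add: set_integral_sum)
  also have "\<dots> = (\<Sum>k\<in>K. if k = j then c k * ?ip k else 0)"
    using ip_zero by (intro sum.cong) auto
  finally show ?thesis using assms(2) by simp
qed

lemma orthogonal_expansion_coeff_eq_0:
  assumes P: "orthogonal_on a b w P UNIV" "\<And>i. degree (P i) = i" "\<And>i. P i \<noteq> 0"
    and Q: "orthogonal_on a b (\<lambda>x. poly \<pi> x * w x) Q I"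
    and K: "finite K" "K \<subseteq> I" "j \<in> K"
    and expansion: "P n = (\<Sum>k\<in>K. smult (c k) (Q k))"
    and degree: "degree (Q j * \<pi>) < n"
  shows "c j = 0"
proof -
  let ?ip = "\<lambda>f g. LINT x:ivl a b|lborel. poly f x * poly g x * (poly \<pi> x * w x)"
  have "j \<in> I" using K by blast
  then have "?ip (Q j) (Q j) \<noteq> 0" using Q unfolding orthogonal_on_def by blast
  moreover have "?ip (P n) (Q j) = c j * ?ip (Q j) (Q j)"
    unfolding expansion using orthogonal_on_integral_sum[OF Q K(1,2) \<open>j \<in> I\<close>] K(3) by simp
  moreover have "?ip (P n) (Q j) = 0"
  proof -
    have "degree (Q j * \<pi>) \<le> n - 1" using degree by simp
    then obtain d where d: "Q j * \<pi> = (\<Sum>i\<le>n - 1. smult (d i) (P i))"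
      using poly_eq_sum_degree_basis[of "n - 1" P] P(2,3) by blast
    have "?ip (P n) (Q j) =
          (LINT x:ivl a b|lborel. poly (\<Sum>i\<le>n - 1. smult (d i) (P i)) x * poly (P n) x * w x)"
      unfolding d[symmetric] by (simp add: mult_ac)
    also have "\<dots> = 0"
      using orthogonal_on_integral_sum[OF P(1), of "{..n - 1}" n d] degree by auto
    finally show ?thesis .
  qed
  ultimately show ?thesis by simp
qed

theorem proposition3p8:
  fixes q :: real and a b :: ereal and w :: "real \<Rightarrow> real"
    and P :: "nat \<Rightarrow> real poly" and \<pi> :: "real poly"
  assumes "0 < q" "q < 1"
    and "a < b"
    and "\<And>n. degree (P n) = n \<and> lead_coeff (P n) = 1"
    and "\<And>x. x \<in> ivl a b \<Longrightarrow> w x \<ge> 0"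
    and "orthogonal_on a b w P UNIV"
    and "degree \<pi> \<le> 4"
    and "orthogonal_on a b (\<lambda>x. poly \<pi> x * w x) (\<lambda>j. AW_op q (AW_op q (P j))) {2..}"
  shows "\<forall>n\<ge>4. \<exists>c :: nat \<Rightarrow> real.
           P n = (\<Sum>k\<in>{n-2..n+2}. smult (c k) (AW_op q (AW_op q (P k))))"
proof (intro allI impI)
  fix n :: nat assume "n \<ge> 4"
  define Q where "Q k = AW_op q (AW_op q (P k))" for k
  have P: "degree (P i) = i" "P i \<noteq> 0" for i using assms(4)[of i] by auto
  have "q \<noteq> 1" using assms(2) by simp
  have Q: "degree (Q (k + 2)) = k" "Q (k + 2) \<noteq> 0" for k
    unfolding Q_def using degree_AW_op_AW_op[OF assms(1) \<open>q \<noteq> 1\<close> P(1)] by simp_all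
  obtain c where "P n = (\<Sum>k\<le>n. smult (c k) (Q (k + 2)))"
    using poly_eq_sum_degree_basis[of n "\<lambda>k. Q (k + 2)" "P n"] Q P by auto
  also have "\<dots> = (\<Sum>k\<in>{2..n + 2}. smult (c (k - 2)) (Q k))"
    using sum.shift_bounds_cl_nat_ivl[of "\<lambda>k. smult (c (k - 2)) (Q k)" 0 2 n]
    by (simp only: atLeast0AtMost add_0 add_diff_cancel_right')
  finally have expansion: "P n = (\<Sum>k\<in>{2..n + 2}. smult (c (k - 2)) (Q k))" .
  have "c (k - 2) = 0" if "k \<in> {2..n + 2} - {n - 2..n + 2}" for k
  proof (rule orthogonal_expansion_coeff_eq_0[OF assms(6) P assms(8)[folded Q_def] _ _ _ expansion])
    from that have "k = (k - 2) + 2" by auto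
    then have "degree (Q k) = k - 2" using Q(1) by metis
    then have "degree (Q k * \<pi>) \<le> (k - 2) + 4" using degree_mult_le[of "Q k" \<pi>] assms(7) by simp
    then show "degree (Q k * \<pi>) < n" using that by auto
  qed (use that in auto)
  then have "P n = (\<Sum>k\<in>{n - 2..n + 2}. smult (c (k - 2)) (Q k))"
    unfolding expansion using \<open>n \<ge> 4\<close> by (intro sum.mono_neutral_right) auto
  then show "\<exists>c. P n = (\<Sum>k\<in>{n-2..n+2}. smult (c k) (AW_op q (AW_op q (P k))))"
    unfolding Q_def by (rule exI[where x = "\<lambda>k. c (k - 2)"])
qed

end
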